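(* Let $p$ be a prime, $S$ a finite $p$-group acting on a finitely generated abelian group $\mathcal{U}$, and $\varepsilon:\mathcal{U}\to\mathbb{F}_p^d$ a surjective homomorphism with $\varepsilon(su)=\varepsilon(u)$ for all $s\in S$, $u\in\mathcal{U}$. Let $L_1\oplus L_2=\mathbb{F}_p^d$ be a direct sum decomposition, $\pi_i$ the projections onto $L_i$ and $\varepsilon_i=\pi_i\circ\varepsilon$ for $i=1,2$. Suppose $C_1,C_2$ are numbers such that $|Su|\geq C_i$ whenever $\varepsilon_i(u)\neq0$ ($i=1,2$). Then $$\operatorname{Rank}(S,\mathcal{U};p)\geq C_1\dim_{\mathbb{F}_p}L_1+C_2\dim_{\mathbb{F}_p}L_2.$$
   Context: A subset $\Gamma\subset\mathcal{U}$ is $p$-generating if the subgroup it generates has finite index prime to $p$. For a finite group $S$ acting on $\mathcal{U}$ with Sylow $p$-subgroup $S_p$, $\operatorname{Rank}(S,\mathcal{U};p)$ is the minimal cardinality of an $S_p$-invariant $p$-generating subset of $\mathcal{U}$. $Su$ denotes the $S$-orbit of $u$. *)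

theory Defs
  imports "HOL-Algebra.Algebra" "HOL-Analysis.Analysis" "Berlekamp_Zassenhaus.Finite_Field"
begin

definition fin_gen_group :: "('a, 'b) monoid_scheme \<Rightarrow> bool" where
  "fin_gen_group G \<longleftrightarrow> (\<exists>A. finite A \<and> A \<subseteq> carrier G \<and> generate G A = carrier G)"

definition p_generating :: "('a, 'b) monoid_scheme \<Rightarrow> nat \<Rightarrow> 'a set \<Rightarrow> bool" where
  "p_generating G p \<Gamma> \<longleftrightarrow> \<Gamma> \<subseteq> carrier G
     \<and> finite (rcosets\<^bsub>G\<^esub> (generate G \<Gamma>))
     \<and> coprime (card (rcosets\<^bsub>G\<^esub> (generate G \<Gamma>))) p"

definition is_sylow :: "('a, 'b) monoid_scheme \<Rightarrow> nat \<Rightarrow> 'a set \<Rightarrow> bool" where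
  "is_sylow S p P \<longleftrightarrow> subgroup P S \<and> card P = p ^ multiplicity p (card (carrier S))"

definition sylow_subgroup :: "('a, 'b) monoid_scheme \<Rightarrow> nat \<Rightarrow> 'a set" where
  "sylow_subgroup S p = (SOME P. is_sylow S p P)"

definition Rank :: "('s, 'c) monoid_scheme \<Rightarrow> ('u, 'b) monoid_scheme \<Rightarrow> ('s \<Rightarrow> 'u \<Rightarrow> 'u) \<Rightarrow> nat \<Rightarrow> nat" where
  "Rank S U \<phi> p = Inf {card \<Gamma> | \<Gamma>. finite \<Gamma> \<and> p_generating U p \<Gamma>
       \<and> (\<forall>s \<in> sylow_subgroup S p. \<phi> s ` \<Gamma> \<subseteq> \<Gamma>)}"

definition dsum_proj :: "'v::ab_group_add set \<Rightarrow> 'v set \<Rightarrow> 'v \<Rightarrow> 'v" where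
  "dsum_proj L M v = (THE a. a \<in> L \<and> v - a \<in> M)"

end

theory Submission
  imports Defs
begin

text \<open>
  Let \<open>\<Gamma>\<close> be an \<open>S\<close>-invariant \<open>p\<close>-generating set of minimal size; as \<open>S\<close> is a \<open>p\<close>-group it
  is its own Sylow subgroup, so \<open>\<Gamma>\<close> is a union of \<open>S\<close>-orbits. If \<open>m\<close> is the index of the
  subgroup generated by \<open>\<Gamma>\<close>, then \<open>u\<^sup>m\<close> lies in it for every \<open>u\<close>, and \<open>m\<close> is invertible
  in \<open>\<bbbF>\<^sub>p\<close>, so \<open>\<epsilon>(\<Gamma>)\<close> spans \<open>\<bbbF>\<^sub>p\<^sup>d\<close>. Since \<open>\<epsilon>\<close> is constant on orbits, one representative
  \<open>r\<close> per orbit gives a spanning family \<open>\<epsilon>(r)\<close> with weights \<open>|Sr|\<close> summing to \<open>|\<Gamma>|\<close>.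
  The representatives with \<open>\<pi>\<^sub>i(\<epsilon>(r)) \<noteq> 0\<close> form a set \<open>N\<^sub>i\<close> whose projections span \<open>L\<^sub>i\<close>, so
  \<open>|N\<^sub>i| \<ge> dim L\<^sub>i\<close> and \<open>|N\<^sub>1 \<union> N\<^sub>2| \<ge> dim L\<^sub>1 + dim L\<^sub>2\<close>; weighting \<open>N\<^sub>1\<close> by \<open>C\<^sub>1\<close> and
  \<open>N\<^sub>2 - N\<^sub>1\<close> by \<open>C\<^sub>2\<close> (for \<open>C\<^sub>2 \<le> C\<^sub>1\<close>) gives the bound.
\<close>

locale complementary_subspaces =
  fixes L1 L2 :: "('a::field ^ 'n) set"
  assumes subspace1: "vec.subspace L1" and subspace2: "vec.subspace L2"
    and inter_eq_zero: "L1 \<inter> L2 = {0}"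
    and sum_eq_UNIV: "\<forall>v. \<exists>a \<in> L1. \<exists>b \<in> L2. v = a + b"
begin

lemma swap: "complementary_subspaces L2 L1"
proof
  show "\<forall>v. \<exists>a \<in> L2. \<exists>b \<in> L1. v = a + b"
    using sum_eq_UNIV by (metis add.commute)
qed (use subspace1 subspace2 inter_eq_zero in auto)

lemma dsum_proj_eqI:
  assumes "a \<in> L1" "v - a \<in> L2"
  shows "dsum_proj L1 L2 v = a"
  unfolding dsum_proj_def
proof (rule the_equality)
  show "a \<in> L1 \<and> v - a \<in> L2" using assms by simp
  fix b assume b: "b \<in> L1 \<and> v - b \<in> L2"
  have "b - a \<in> L1" using b assms(1) subspace1 by (simp add: vec.subspace_diff)
  moreover have "b - a \<in> L2"
    using vec.subspace_diff[OF subspace2, of "v - a" "v - b"] b assms(2) by simp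
  ultimately have "b - a \<in> L1 \<inter> L2" by simp
  then show "b = a" using inter_eq_zero by simp
qed

lemma dsum_proj_mem: "dsum_proj L1 L2 v \<in> L1"
  and dsum_proj_diff_mem: "v - dsum_proj L1 L2 v \<in> L2"
proof -
  obtain a b where "a \<in> L1" "b \<in> L2" "v = a + b" using sum_eq_UNIV by blast
  then have "dsum_proj L1 L2 v = a" by (intro dsum_proj_eqI) simp_all
  with \<open>a \<in> L1\<close> \<open>b \<in> L2\<close> \<open>v = a + b\<close>
  show "dsum_proj L1 L2 v \<in> L1" "v - dsum_proj L1 L2 v \<in> L2" by simp_all
qed

lemma dsum_proj_swap: "dsum_proj L2 L1 v = v - dsum_proj L1 L2 v"
  by (rule complementary_subspaces.dsum_proj_eqI[OF swap])
    (simp_all add: dsum_proj_mem dsum_proj_diff_mem)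

lemma linear_dsum_proj: "Vector_Spaces.linear (*s) (*s) (dsum_proj L1 L2)"
proof -
  have "dsum_proj L1 L2 (x + y) = dsum_proj L1 L2 x + dsum_proj L1 L2 y" for x y
  proof (rule dsum_proj_eqI)
    show "dsum_proj L1 L2 x + dsum_proj L1 L2 y \<in> L1"
      using subspace1 by (simp add: dsum_proj_mem vec.subspace_add)
    have "(x - dsum_proj L1 L2 x) + (y - dsum_proj L1 L2 y) \<in> L2"
      using subspace2 by (simp add: dsum_proj_diff_mem vec.subspace_add)
    then show "x + y - (dsum_proj L1 L2 x + dsum_proj L1 L2 y) \<in> L2"
      by (simp add: algebra_simps)
  qed
  moreover have "dsum_proj L1 L2 (c *s x) = c *s dsum_proj L1 L2 x" for c x
  proof (rule dsum_proj_eqI)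
    show "c *s dsum_proj L1 L2 x \<in> L1"
      using subspace1 by (simp add: dsum_proj_mem vec.subspace_scale)
    have "c *s (x - dsum_proj L1 L2 x) \<in> L2"
      by (rule vec.subspace_scale[OF subspace2 dsum_proj_diff_mem])
    then show "c *s x - c *s dsum_proj L1 L2 x \<in> L2"
      by (metis vector_ssub_ldistrib)
  qed
  ultimately show ?thesis
    unfolding Vector_Spaces.linear_iff using vec.vector_space_axioms by blast
qed

lemma subset_span_dsum_proj_image:
  assumes "vec.span A = UNIV"
  shows "L1 \<subseteq> vec.span (dsum_proj L1 L2 ` A)"
proof -
  have "vec.span (dsum_proj L1 L2 ` A) = dsum_proj L1 L2 ` UNIV"
    using linear_dsum_proj assms by (metis module_hom_iff_linear module_hom.span_image)
  moreover have "dsum_proj L1 L2 x = x" if "x \<in> L1" for x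
    using that subspace2 by (intro dsum_proj_eqI) (simp_all add: vec.subspace_0)
  ultimately show ?thesis by (metis UNIV_I image_eqI subsetI)
qed

lemma dim_add_dim: "vec.dim L1 + vec.dim L2 = vec.dim (UNIV :: ('a ^ 'n) set)"
proof -
  have "{x + y |x y. x \<in> L1 \<and> y \<in> L2} = UNIV" using sum_eq_UNIV by blast
  moreover have "vec.dim {0 :: 'a ^ 'n} = 0"
    using vec.dim_le_card[of "{0 :: 'a ^ 'n}" "{}"] by simp
  ultimately show ?thesis
    using vec.dim_sums_Int[OF subspace1 subspace2] inter_eq_zero by simp
qed

end

lemma dim_le_card_nonzero:
  fixes g :: "'x \<Rightarrow> 'a::field ^ 'n"
  assumes "finite A" "V \<subseteq> vec.span (g ` A)"
  shows "vec.dim V \<le> card {x \<in> A. g x \<noteq> 0}"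
proof -
  have "vec.span (g ` A) \<subseteq> vec.span (insert 0 (g ` {x \<in> A. g x \<noteq> 0}))"
    by (rule vec.span_mono) auto
  then have "V \<subseteq> vec.span (g ` {x \<in> A. g x \<noteq> 0})"
    using assms(2) by simp
  then have "vec.dim V \<le> card (g ` {x \<in> A. g x \<noteq> 0})"
    using assms(1) by (intro vec.dim_le_card) simp_all
  also have "\<dots> \<le> card {x \<in> A. g x \<noteq> 0}"
    using assms(1) by (intro card_image_le) simp
  finally show ?thesis .
qed

lemma sum_Un_ge_weighted_bound_ordered:
  fixes w :: "'x \<Rightarrow> real"
  assumes "finite N1" "finite N2"
    and "\<forall>x\<in>N1. c1 \<le> w x" "\<forall>x\<in>N2. c2 \<le> w x" "0 \<le> c2" "c2 \<le> c1"
    and "d1 \<le> card N1" "d1 + d2 \<le> card (N1 \<union> N2)"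
  shows "c1 * real d1 + c2 * real d2 \<le> sum w (N1 \<union> N2)"
proof -
  have card_Un: "card (N1 \<union> N2) = card N1 + card (N2 - N1)"
    using card_Un_disjoint[of N1 "N2 - N1"] assms(1,2) by simp
  have "(c1 - c2) * real d1 \<le> (c1 - c2) * real (card N1)"
    using assms(6,7) by (intro mult_left_mono) simp_all
  moreover have "c2 * (real d1 + real d2) \<le> c2 * real (card (N1 \<union> N2))"
    using assms(5,8) by (intro mult_left_mono) (simp_all flip: of_nat_add)
  ultimately have "c1 * real d1 + c2 * real d2
      \<le> (c1 - c2) * real (card N1) + c2 * real (card (N1 \<union> N2))"
    by (simp add: algebra_simps)
  also have "\<dots> = c1 * real (card N1) + c2 * real (card (N2 - N1))"
    using card_Un by (simp add: algebra_simps)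
  also have "\<dots> \<le> sum w N1 + sum w (N2 - N1)"
    using sum_mono[of N1 "\<lambda>_. c1" w] sum_mono[of "N2 - N1" "\<lambda>_. c2" w] assms(3,4)
    by (simp add: mult.commute)
  also have "\<dots> = sum w (N1 \<union> N2)"
    using sum.union_disjoint[of N1 "N2 - N1" w] assms(1,2) by simp
  finally show ?thesis .
qed

lemma sum_Un_ge_weighted_bound:
  fixes w :: "'x \<Rightarrow> real"
  assumes "finite N1" "finite N2"
    and "\<forall>x\<in>N1. c1 \<le> w x" "\<forall>x\<in>N2. c2 \<le> w x" "0 \<le> c1" "0 \<le> c2"
    and "d1 \<le> card N1" "d2 \<le> card N2" "d1 + d2 \<le> card (N1 \<union> N2)"
  shows "c1 * real d1 + c2 * real d2 \<le> sum w (N1 \<union> N2)"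
proof (cases "c2 \<le> c1")
  case True
  then show ?thesis by (rule sum_Un_ge_weighted_bound_ordered[OF assms(1-4,6) _ assms(7,9)])
next
  case False
  then have "c2 * real d2 + c1 * real d1 \<le> sum w (N2 \<union> N1)"
    using assms by (intro sum_Un_ge_weighted_bound_ordered) (simp_all add: Un_commute)
  then show ?thesis by (simp add: Un_commute add.commute)
qed

lemma (in complementary_subspaces) weighted_dim_bound:
  fixes v :: "'x \<Rightarrow> 'a ^ 'n" and w :: "'x \<Rightarrow> real"
  assumes "finite R" "vec.span (v ` R) = UNIV" "\<forall>r\<in>R. 0 \<le> w r"
    and "\<forall>r\<in>R. dsum_proj L1 L2 (v r) \<noteq> 0 \<longrightarrow> C1 \<le> w r"
    and "\<forall>r\<in>R. dsum_proj L2 L1 (v r) \<noteq> 0 \<longrightarrow> C2 \<le> w r"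
  shows "C1 * real (vec.dim L1) + C2 * real (vec.dim L2) \<le> sum w R"
proof -
  define N1 where "N1 = {r \<in> R. dsum_proj L1 L2 (v r) \<noteq> 0}"
  define N2 where "N2 = {r \<in> R. dsum_proj L2 L1 (v r) \<noteq> 0}"
  have N: "finite N1" "finite N2" "N1 \<union> N2 \<subseteq> R"
    using assms(1) by (auto simp: N1_def N2_def)
  have w: "\<forall>r\<in>N1. max C1 0 \<le> w r" "\<forall>r\<in>N2. max C2 0 \<le> w r"
    using assms(3-5) by (simp_all add: N1_def N2_def)
  have "vec.dim L1 \<le> card N1"
    unfolding N1_def using subset_span_dsum_proj_image[OF assms(2)] assms(1)
    by (intro dim_le_card_nonzero) (simp_all add: image_image)
  moreover have "vec.dim L2 \<le> card N2"
    unfolding N2_def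
    using complementary_subspaces.subset_span_dsum_proj_image[OF swap assms(2)] assms(1)
    by (intro dim_le_card_nonzero) (simp_all add: image_image)
  moreover have "vec.dim L1 + vec.dim L2 \<le> card (N1 \<union> N2)"
  proof -
    have "vec.dim (UNIV :: ('a ^ 'n) set) \<le> card {r \<in> R. v r \<noteq> 0}"
      using assms(1,2) by (intro dim_le_card_nonzero) simp_all
    also have "\<dots> \<le> card (N1 \<union> N2)"
      using N by (intro card_mono) (auto simp: N1_def N2_def dsum_proj_swap)
    finally show ?thesis using dim_add_dim by simp
  qed
  ultimately have
    "max C1 0 * real (vec.dim L1) + max C2 0 * real (vec.dim L2) \<le> sum w (N1 \<union> N2)"
    using N(1,2) w by (intro sum_Un_ge_weighted_bound) simp_all
  also have "\<dots> \<le> sum w R"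
    using assms(1,3) N(3) by (intro sum_mono2) auto
  finally have "max C1 0 * real (vec.dim L1) + max C2 0 * real (vec.dim L2) \<le> sum w R" .
  moreover have "C1 * real (vec.dim L1) \<le> max C1 0 * real (vec.dim L1)"
    "C2 * real (vec.dim L2) \<le> max C2 0 * real (vec.dim L2)"
    by (simp_all add: mult_right_mono)
  ultimately show ?thesis by linarith
qed

locale vec_valued_hom = group U for U :: "('u, 'b) monoid_scheme" (structure) +
  fixes \<epsilon> :: "'u \<Rightarrow> 'a::field ^ 'n"
  assumes hom_mult: "\<lbrakk>x \<in> carrier U; y \<in> carrier U\<rbrakk> \<Longrightarrow> \<epsilon> (x \<otimes> y) = \<epsilon> x + \<epsilon> y"
begin

lemma hom_one: "\<epsilon> \<one> = 0"
  using hom_mult[of \<one> \<one>] by simp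

lemma hom_inv: "x \<in> carrier U \<Longrightarrow> \<epsilon> (inv x) = - \<epsilon> x"
  using hom_mult[of "inv x" x] hom_one by (simp add: eq_neg_iff_add_eq_0)

lemma hom_nat_pow: "x \<in> carrier U \<Longrightarrow> \<epsilon> (x [^] m) = of_nat m *s \<epsilon> x"
  by (induction m) (simp_all add: hom_one hom_mult vector_sadd_rdistrib)

lemma hom_generate_subset_span:
  assumes "\<Gamma> \<subseteq> carrier U"
  shows "\<epsilon> ` generate U \<Gamma> \<subseteq> vec.span (\<epsilon> ` \<Gamma>)"
proof
  fix y assume "y \<in> \<epsilon> ` generate U \<Gamma>"
  then obtain h where "h \<in> generate U \<Gamma>" "y = \<epsilon> h" by blast
  moreover have "\<epsilon> h \<in> vec.span (\<epsilon> ` \<Gamma>)" if "h \<in> generate U \<Gamma>" for h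
    using that
  proof (induction h rule: generate.induct)
    case one
    then show ?case by (simp add: hom_one vec.span_zero)
  next
    case (incl h)
    then show ?case by (simp add: vec.span_base)
  next
    case (inv h)
    then show ?case using assms by (auto simp: hom_inv vec.span_base vec.span_neg)
  next
    case (eng h1 h2)
    then have "h1 \<in> carrier U" "h2 \<in> carrier U"
      using generate_incl[OF assms] by blast+
    then show ?case using eng.IH by (simp add: hom_mult vec.span_add)
  qed
  ultimately show "y \<in> vec.span (\<epsilon> ` \<Gamma>)" by simp
qed

end

lemma (in comm_group) nat_pow_card_rcosets_mem:
  assumes "subgroup H G" "u \<in> carrier G"
  shows "u [^] card (rcosets H) \<in> H"
proof -
  have N: "H \<lhd> G" using assms(1) subgroup_imp_normal by blast
  interpret Q: group "G Mod H" using normal.factorgroup_is_group[OF N] .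
  have "H #> u \<in> carrier (G Mod H)"
    using assms by (simp add: FactGroup_def rcosetsI subgroup.subset)
  then have "(H #> u) [^]\<^bsub>G Mod H\<^esub> card (rcosets H) = H"
    using Q.pow_order_eq_1 by (simp add: Coset.order_def FactGroup_def)
  then have "H #> (u [^] card (rcosets H)) = H"
    using normal.FactGroup_pow[OF N assms(2)] by simp
  then show ?thesis
    using rcos_self[OF _ assms(1)] assms(2) by (metis nat_pow_closed)
qed

lemma span_image_p_generating:
  fixes \<epsilon> :: "'u \<Rightarrow> 'a::field ^ 'n"
  assumes "comm_group U" "vec_valued_hom U \<epsilon>" "\<epsilon> ` carrier U = UNIV"
    and "p_generating U CHAR('a) \<Gamma>"
  shows "vec.span (\<epsilon> ` \<Gamma>) = UNIV"
proof -
  interpret comm_group U by fact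
  interpret vec_valued_hom U \<epsilon> by fact
  define m where "m = card (rcosets\<^bsub>U\<^esub> generate U \<Gamma>)"
  have \<Gamma>: "\<Gamma> \<subseteq> carrier U" "coprime m CHAR('a)"
    using assms(4) unfolding p_generating_def m_def by auto
  have "\<not> CHAR('a) dvd m"
  proof
    assume "CHAR('a) dvd m"
    with \<Gamma>(2) have "is_unit CHAR('a)" by (simp add: coprime_absorb_right)
    then show False by simp
  qed
  then have m: "(of_nat m :: 'a) \<noteq> 0"
    by (simp add: of_nat_eq_0_iff_char_dvd)
  have "v \<in> vec.span (\<epsilon> ` \<Gamma>)" for v
  proof -
    have "v \<in> \<epsilon> ` carrier U" using assms(3) by simp
    then obtain u where u: "u \<in> carrier U" "v = \<epsilon> u" by blast
    have "u [^]\<^bsub>U\<^esub> m \<in> generate U \<Gamma>"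
      unfolding m_def by (rule nat_pow_card_rcosets_mem[OF generate_is_subgroup[OF \<Gamma>(1)] u(1)])
    then have "\<epsilon> (u [^]\<^bsub>U\<^esub> m) \<in> vec.span (\<epsilon> ` \<Gamma>)"
      by (intro subsetD[OF hom_generate_subset_span[OF \<Gamma>(1)]] imageI)
    then have "of_nat m *s v \<in> vec.span (\<epsilon> ` \<Gamma>)"
      using hom_nat_pow[OF u(1)] u(2) by simp
    then have "inverse (of_nat m) *s (of_nat m *s v) \<in> vec.span (\<epsilon> ` \<Gamma>)"
      by (rule vec.span_scale)
    then show ?thesis using m by (simp add: vector_smult_assoc)
  qed
  then show ?thesis by auto
qed

lemma (in group_action) image_orbit_invariant:
  assumes "\<forall>g \<in> carrier G. \<forall>y \<in> E. f (\<phi> g y) = f y" "x \<in> E"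
  shows "f ` orbit G \<phi> x = {f x}"
proof
  show "f ` orbit G \<phi> x \<subseteq> {f x}" using assms unfolding orbit_def by auto
  show "{f x} \<subseteq> f ` orbit G \<phi> x" using orbit_refl[OF assms(2)] by blast
qed

lemma (in group_action) image_UN_orbit_invariant:
  assumes "\<forall>g \<in> carrier G. \<forall>y \<in> E. f (\<phi> g y) = f y" "R \<subseteq> E"
  shows "f ` (\<Union>r\<in>R. orbit G \<phi> r) = f ` R"
proof -
  have "f ` (\<Union>r\<in>R. orbit G \<phi> r) = (\<Union>r\<in>R. f ` orbit G \<phi> r)"
    by (rule image_UN)
  also have "\<dots> = (\<Union>r\<in>R. {f r})"
    using assms(2) by (intro SUP_cong[OF refl] image_orbit_invariant[OF assms(1)]) blast
  finally show ?thesis by blast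
qed

lemma (in group_action) orbit_representatives:
  assumes "finite \<Gamma>" "\<Gamma> \<subseteq> E" "\<forall>g \<in> carrier G. \<phi> g ` \<Gamma> \<subseteq> \<Gamma>"
  obtains R where "R \<subseteq> \<Gamma>" "\<Gamma> = (\<Union>r\<in>R. orbit G \<phi> r)"
    "card \<Gamma> = (\<Sum>r\<in>R. card (orbit G \<phi> r))"
proof -
  have "\<exists>R \<subseteq> \<Gamma>. inj_on (orbit G \<phi>) R \<and> orbit G \<phi> ` \<Gamma> = orbit G \<phi> ` R"
    by (metis order.refl subset_image_inj)
  then obtain R where R: "R \<subseteq> \<Gamma>" "inj_on (orbit G \<phi>) R" "orbit G \<phi> ` R = orbit G \<phi> ` \<Gamma>"
    by auto
  have orbit_subset: "orbit G \<phi> x \<subseteq> \<Gamma>" if "x \<in> \<Gamma>" for x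
    using assms(3) that unfolding orbit_def by blast
  have cover: "\<Gamma> = (\<Union>r\<in>R. orbit G \<phi> r)"
  proof -
    have "\<Gamma> = (\<Union>x\<in>\<Gamma>. orbit G \<phi> x)"
      using orbit_subset orbit_refl assms(2) by blast
    then show ?thesis using R(3) by simp
  qed
  have "orbit G \<phi> r \<inter> orbit G \<phi> s = {}" if "r \<in> R" "s \<in> R" "r \<noteq> s" for r s
  proof -
    have "orbit G \<phi> r \<in> orbits G E \<phi>" "orbit G \<phi> s \<in> orbits G E \<phi>"
      using that R(1) assms(2) unfolding orbits_def by blast+
    moreover have "orbit G \<phi> r \<noteq> orbit G \<phi> s"
      using R(2) that by (meson inj_on_contraD)
    ultimately show ?thesis using disjoint_union by blast
  qed
  moreover have "finite R" "\<forall>r\<in>R. finite (orbit G \<phi> r)"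
    using R(1) assms(1) orbit_subset by (auto intro: finite_subset)
  ultimately have "card \<Gamma> = (\<Sum>r\<in>R. card (orbit G \<phi> r))"
    unfolding cover by (intro card_UN_disjoint) auto
  with R(1) cover show ?thesis by (rule that)
qed

lemma exists_finite_invariant_generating_set:
  assumes "group_action S (carrier U) \<phi>" "group U" "finite (carrier S)" "fin_gen_group U"
  obtains \<Gamma> where "finite \<Gamma>" "\<Gamma> \<subseteq> carrier U" "generate U \<Gamma> = carrier U"
    "\<forall>s \<in> carrier S. \<phi> s ` \<Gamma> \<subseteq> \<Gamma>"
proof -
  interpret group_action S "carrier U" \<phi> by fact
  interpret S: group S by (rule group_hom.axioms(1)[OF group_hom])
  interpret U: group U by fact
  obtain B where B: "finite B" "B \<subseteq> carrier U" "generate U B = carrier U"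
    using assms(4) unfolding fin_gen_group_def by blast
  define \<Gamma> where "\<Gamma> = (\<Union>b\<in>B. orbit S \<phi> b)"
  have "finite (orbit S \<phi> b)" for b
    using assms(3) by (simp add: orbit_def setcompr_eq_image)
  then have fin: "finite \<Gamma>" unfolding \<Gamma>_def using B(1) by blast
  have sub: "\<Gamma> \<subseteq> carrier U"
    using B(2) by (auto simp: \<Gamma>_def orbit_def intro: element_image)
  have "B \<subseteq> \<Gamma>" unfolding \<Gamma>_def using orbit_refl B(2) by blast
  then have gen: "generate U \<Gamma> = carrier U"
    using U.generate_incl[OF sub] U.mono_generate[of B \<Gamma>, unfolded B(3)] by (intro equalityI)
  have inv: "\<forall>s \<in> carrier S. \<phi> s ` \<Gamma> \<subseteq> \<Gamma>"
  proof (intro ballI subsetI)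
    fix s y assume s: "s \<in> carrier S" and "y \<in> \<phi> s ` \<Gamma>"
    then obtain b g where bg: "b \<in> B" "g \<in> carrier S" "y = \<phi> s (\<phi> g b)"
      unfolding \<Gamma>_def orbit_def by blast
    then have "y = \<phi> (s \<otimes>\<^bsub>S\<^esub> g) b"
      using composition_rule B(2) s by auto
    moreover have "s \<otimes>\<^bsub>S\<^esub> g \<in> carrier S"
      using s bg(2) by (rule S.m_closed)
    ultimately show "y \<in> \<Gamma>"
      unfolding \<Gamma>_def orbit_def using bg(1) by blast
  qed
  from fin sub gen inv show ?thesis by (rule that)
qed

lemma p_generating_if_generate_eq_carrier:
  assumes "group U" "\<Gamma> \<subseteq> carrier U" "generate U \<Gamma> = carrier U"
  shows "p_generating U p \<Gamma>"
proof -
  interpret group U by fact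
  have "carrier U #>\<^bsub>U\<^esub> x = carrier U" if "x \<in> carrier U" for x
    using subgroup.rcos_const[OF subgroup_self is_group that] .
  then have "rcosets\<^bsub>U\<^esub> (carrier U) = {carrier U}"
    unfolding RCOSETS_def by auto
  then show ?thesis unfolding p_generating_def assms(3) using assms(2) by simp
qed

lemma Rank_attained:
  assumes "finite \<Gamma>0" "p_generating U p \<Gamma>0" "\<forall>s \<in> sylow_subgroup S p. \<phi> s ` \<Gamma>0 \<subseteq> \<Gamma>0"
  obtains \<Gamma> where "finite \<Gamma>" "p_generating U p \<Gamma>" "\<forall>s \<in> sylow_subgroup S p. \<phi> s ` \<Gamma> \<subseteq> \<Gamma>"
    "card \<Gamma> = Rank S U \<phi> p"
proof -
  define K where "K = {card \<Gamma> | \<Gamma>. finite \<Gamma> \<and> p_generating U p \<Gamma>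
    \<and> (\<forall>s \<in> sylow_subgroup S p. \<phi> s ` \<Gamma> \<subseteq> \<Gamma>)}"
  have "card \<Gamma>0 \<in> K" unfolding K_def using assms by blast
  then have "K \<noteq> {}" by blast
  then have "Rank S U \<phi> p \<in> K" unfolding Rank_def K_def[symmetric] by (rule Inf_nat_def1)
  then obtain \<Gamma> where \<Gamma>: "Rank S U \<phi> p = card \<Gamma>" "finite \<Gamma>" "p_generating U p \<Gamma>"
    "\<forall>s \<in> sylow_subgroup S p. \<phi> s ` \<Gamma> \<subseteq> \<Gamma>"
    unfolding K_def by blast
  show ?thesis by (rule that) (use \<Gamma> in simp_all)
qed

lemma sylow_subgroup_p_group:
  assumes "group S" "finite (carrier S)" "Factorial_Ring.prime (p :: nat)"
    and "card (carrier S) = p ^ k"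
  shows "sylow_subgroup S p = carrier S"
proof -
  have "p \<noteq> 0" "\<not> is_unit p" using assms(3) by auto
  then have "multiplicity p (card (carrier S)) = k"
    using assms(4) by (simp add: multiplicity_same_power)
  then have sylow_iff: "is_sylow S p P \<longleftrightarrow> subgroup P S \<and> card P = card (carrier S)" for P
    unfolding is_sylow_def using assms(4) by simp
  have "is_sylow S p (carrier S)"
    unfolding sylow_iff using group.subgroup_self[OF assms(1)] by simp
  then have "is_sylow S p (sylow_subgroup S p)"
    unfolding sylow_subgroup_def by (rule someI)
  then have "sylow_subgroup S p \<subseteq> carrier S" "card (sylow_subgroup S p) = card (carrier S)"
    unfolding sylow_iff using subgroup.subset by blast+
  then show ?thesis using card_subset_eq[OF assms(2)] by blast
qed

lemma Rank_attained_p_group: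
  assumes "group_action S (carrier U) \<phi>" "group U" "fin_gen_group U"
    and "finite (carrier S)" "Factorial_Ring.prime p" "card (carrier S) = p ^ k"
  obtains \<Gamma> where "finite \<Gamma>" "p_generating U p \<Gamma>" "\<forall>s \<in> carrier S. \<phi> s ` \<Gamma> \<subseteq> \<Gamma>"
    "card \<Gamma> = Rank S U \<phi> p"
proof -
  have "group S" using assms(1) group_action.group_hom group_hom.axioms(1) by blast
  then have syl: "sylow_subgroup S p = carrier S"
    using assms(4-6) by (rule sylow_subgroup_p_group)
  obtain \<Gamma>0 where \<Gamma>0: "finite \<Gamma>0" "\<Gamma>0 \<subseteq> carrier U" "generate U \<Gamma>0 = carrier U"
    "\<forall>s \<in> carrier S. \<phi> s ` \<Gamma>0 \<subseteq> \<Gamma>0"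
    by (rule exists_finite_invariant_generating_set[OF assms(1,2,4,3)])
  have "p_generating U p \<Gamma>0"
    by (rule p_generating_if_generate_eq_carrier[OF assms(2) \<Gamma>0(2,3)])
  then show ?thesis using that
    by (rule Rank_attained[of \<Gamma>0 U p S \<phi>, unfolded syl, OF \<Gamma>0(1) _ \<Gamma>0(4)])
qed

theorem lemma13p1:
  fixes S :: "('s, 'c) monoid_scheme" and U :: "('u, 'b) monoid_scheme"
    and \<phi> :: "'s \<Rightarrow> 'u \<Rightarrow> 'u"
    and \<epsilon> :: "'u \<Rightarrow> ('p::prime_card mod_ring) ^ 'n"
    and L1 L2 :: "(('p::prime_card mod_ring) ^ 'n) set"
    and C1 C2 :: real
  assumes "group S" and "finite (carrier S)" and "\<exists>k. card (carrier S) = CARD('p) ^ k"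
    and "comm_group U" and "fin_gen_group U"
    and "group_action S (carrier U) \<phi>"
    and "\<forall>s \<in> carrier S. \<phi> s \<in> hom U U"
    and "\<forall>x \<in> carrier U. \<forall>y \<in> carrier U. \<epsilon> (x \<otimes>\<^bsub>U\<^esub> y) = \<epsilon> x + \<epsilon> y"
    and "\<epsilon> ` carrier U = UNIV"
    and "\<forall>s \<in> carrier S. \<forall>u \<in> carrier U. \<epsilon> (\<phi> s u) = \<epsilon> u"
    and "vec.subspace L1" and "vec.subspace L2"
    and "L1 \<inter> L2 = {0}" and "\<forall>v. \<exists>a \<in> L1. \<exists>b \<in> L2. v = a + b"
    and "\<forall>u \<in> carrier U. dsum_proj L1 L2 (\<epsilon> u) \<noteq> 0 \<longrightarrow> real (card (orbit S \<phi> u)) \<ge> C1"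
    and "\<forall>u \<in> carrier U. dsum_proj L2 L1 (\<epsilon> u) \<noteq> 0 \<longrightarrow> real (card (orbit S \<phi> u)) \<ge> C2"
  shows "real (Rank S U \<phi> CARD('p)) \<ge> C1 * real (vec.dim L1) + C2 * real (vec.dim L2)"
proof -
  interpret U: comm_group U by fact
  interpret act: group_action S "carrier U" \<phi> by fact
  interpret L: complementary_subspaces L1 L2 by unfold_locales fact+
  have \<epsilon>: "vec_valued_hom U \<epsilon>" by unfold_locales (use assms(8) in blast)
  obtain k where "card (carrier S) = CARD('p) ^ k" using assms(3) by blast
  then obtain \<Gamma> where \<Gamma>: "finite \<Gamma>" "p_generating U CARD('p) \<Gamma>"
    "\<forall>s \<in> carrier S. \<phi> s ` \<Gamma> \<subseteq> \<Gamma>" "card \<Gamma> = Rank S U \<phi> CARD('p)"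
    by (rule Rank_attained_p_group[OF assms(6) U.is_group assms(5,2) prime_card])
  then have \<Gamma>U: "\<Gamma> \<subseteq> carrier U" unfolding p_generating_def by blast
  obtain R where R: "R \<subseteq> \<Gamma>" "\<Gamma> = (\<Union>r\<in>R. orbit S \<phi> r)"
    "card \<Gamma> = (\<Sum>r\<in>R. card (orbit S \<phi> r))"
    by (rule act.orbit_representatives[OF \<Gamma>(1) \<Gamma>U \<Gamma>(3)])
  have "\<epsilon> ` R = \<epsilon> ` \<Gamma>"
    using act.image_UN_orbit_invariant[OF assms(10)] R(1,2) \<Gamma>U by auto
  moreover have "vec.span (\<epsilon> ` \<Gamma>) = UNIV"
    using span_image_p_generating[OF assms(4) \<epsilon> assms(9)] \<Gamma>(2)
    by (simp add: semiring_char_mod_ring)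
  ultimately have "C1 * real (vec.dim L1) + C2 * real (vec.dim L2)
      \<le> (\<Sum>r\<in>R. real (card (orbit S \<phi> r)))"
    using R(1) \<Gamma>(1) \<Gamma>U assms(15,16)
    by (intro L.weighted_dim_bound) (auto intro: finite_subset)
  then show ?thesis using R(3) \<Gamma>(4) by simp
qed

end
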